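(* Let $q$ be a prime power, let $n,k$ be integers with $3\le k\le n-2\le q-2$, and let $h=(k-1)+r$ with $k-1\le r\le q-k-1$. Let $\alpha_1,\dots,\alpha_n\in\mathbb{F}_q$ be pairwise distinct, let $G_{h,k}$ be the $k\times n$ matrix whose rows are $(\alpha_1^{e},\dots,\alpha_n^{e})$ for $e=0,1,\dots,k-2$ and $e=h$, let $\mathbf v=(v_1,\dots,v_n)\in(\mathbb{F}_q^* )^n$ and let $C_{h,\mathbf v}$ be the linear code generated by $G_{h,k}\cdot\mathrm{diag}(v_1,\dots,v_n)$. Let $u_i=\prod_{j\ne i}(\alpha_i-\alpha_j)^{-1}$ and $S_t=S_t(\alpha_1,\dots,\alpha_n)$. Then $C_{h,\mathbf v}$ is self-orthogonal if and only if there exists a polynomial $f(x)=\sum_{j=0}^{n-2k+2}f_jx^j\in\mathbb{F}_q[x]$ such that (1) $v_i^2=u_if(\alpha_i)$ for all $1\le i\le n$; (2) $\sum_{j=b}^{b+2r+1}f_jS_{j-b}=0$, where $b=n-2k-2r+1$; (3) for every $l$ with $(k-1)+r\le l\le(2k-3)+r$, $\sum_{j=s}^{s+l-2k+3}f_jS_{j-s}=0$, where $s=n-l-1$; here $f_j=0$ for $j<0$.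
   Context: Convention: $0^0=1$. $S_t(x_1,\dots,x_m)=\sum_{t_1+\dots+t_m=t,\ t_i\ge0}x_1^{t_1}\cdots x_m^{t_m}$ is the complete homogeneous symmetric polynomial of degree $t$ ($S_0=1$). A linear code $C$ is self-orthogonal if $C\subseteq C^\perp$ (Euclidean dual). *)

theory Defs
  imports "HOL-Computational_Algebra.Polynomial" "HOL-Library.FuncSet" "HOL-Library.Cardinality"
begin

definition complete_hom :: "nat \<Rightarrow> nat \<Rightarrow> (nat \<Rightarrow> 'a::comm_ring_1) \<Rightarrow> 'a" where
  "complete_hom n t x =
     (\<Sum>e\<in>{e \<in> {1..n} \<rightarrow>\<^sub>E {0..t}. (\<Sum>i\<in>{1..n}. e i) = t}. \<Prod>i\<in>{1..n}. x i ^ e i)"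

definition row_span :: "nat \<Rightarrow> 'r set \<Rightarrow> ('r \<Rightarrow> nat \<Rightarrow> 'a::field) \<Rightarrow> (nat \<Rightarrow> 'a) set" where
  "row_span n R g = {w. \<exists>c. w = (\<lambda>i. if i \<in> {1..n} then (\<Sum>e\<in>R. c e * g e i) else 0)}"

definition euclid_inner :: "nat \<Rightarrow> (nat \<Rightarrow> 'a::comm_ring_1) \<Rightarrow> (nat \<Rightarrow> 'a) \<Rightarrow> 'a" where
  "euclid_inner n x y = (\<Sum>i\<in>{1..n}. x i * y i)"

definition dual_code :: "nat \<Rightarrow> (nat \<Rightarrow> 'a::comm_ring_1) set \<Rightarrow> (nat \<Rightarrow> 'a) set" where
  "dual_code n C = {y. (\<forall>i. i \<notin> {1..n} \<longrightarrow> y i = 0) \<and> (\<forall>x\<in>C. euclid_inner n x y = 0)}"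

definition self_orthogonal :: "nat \<Rightarrow> (nat \<Rightarrow> 'a::comm_ring_1) set \<Rightarrow> bool" where
  "self_orthogonal n C \<longleftrightarrow> C \<subseteq> dual_code n C"

definition GRS_code :: "nat \<Rightarrow> nat \<Rightarrow> nat \<Rightarrow> (nat \<Rightarrow> 'a::field) \<Rightarrow> (nat \<Rightarrow> 'a) \<Rightarrow> (nat \<Rightarrow> 'a) set" where
  "GRS_code n k h \<alpha> v = row_span n ({0..k-2} \<union> {h}) (\<lambda>e i. \<alpha> i ^ e * v i)"

definition icoeff :: "'a::zero poly \<Rightarrow> int \<Rightarrow> 'a" where
  "icoeff f j = (if j < 0 then 0 else coeff f (nat j))"

end

theory Submission
  imports Defs
begin

(* Self-orthogonality of C_{h,v} means that the moments sum_i v_i^2 alpha_i^m vanish for all m in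
   the sumset of the row exponents, {0..2k-4} u {h..h+k-2} u {2h}.  Lagrange interpolation writes
   v_i^2 = u_i f(alpha_i) with deg f < n, and the divided-difference identity
   sum_i u_i alpha_i^m = S_{m-n+1}(alpha)  (zero for m < n-1)
   turns the m-th moment into sum_j f_j S_{m+j-n+1}.  The moments with m <= 2k-4 form a
   unitriangular system in the top coefficients of f, which forces deg f <= n-2k+2; the remaining
   moments, m = h..h+k-2 and m = 2h, are conditions (3) and (2). *)

definition exponent_vectors :: "'b set \<Rightarrow> nat \<Rightarrow> ('b \<Rightarrow> nat) set" where
  "exponent_vectors A t = {e \<in> A \<rightarrow>\<^sub>E {0..t}. sum e A = t}"

definition complete_hom_on :: "'b set \<Rightarrow> nat \<Rightarrow> ('b \<Rightarrow> 'a::comm_ring_1) \<Rightarrow> 'a" where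
  "complete_hom_on A t x = (\<Sum>e\<in>exponent_vectors A t. \<Prod>i\<in>A. x i ^ e i)"

lemma complete_hom_eq_complete_hom_on: "complete_hom n t x = complete_hom_on {1..n} t x"
  unfolding complete_hom_def complete_hom_on_def exponent_vectors_def by simp

lemma finite_exponent_vectors: "finite A \<Longrightarrow> finite (exponent_vectors A t)"
  by (rule finite_subset[of _ "A \<rightarrow>\<^sub>E {0..t}"]) (auto simp: exponent_vectors_def intro: finite_PiE)

lemma complete_hom_on_empty: "complete_hom_on {} t x = (if t = 0 then 1 else 0)"
proof (cases "t = 0")
  case True
  then have "exponent_vectors ({} :: 'b set) t = {\<lambda>_. undefined}"
    unfolding exponent_vectors_def by auto
  with True show ?thesis by (simp add: complete_hom_on_def)
next
  case False
  then have "exponent_vectors ({} :: 'b set) t = {}"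
    unfolding exponent_vectors_def by auto
  with False show ?thesis by (simp add: complete_hom_on_def)
qed

lemma bij_betw_exponent_vectors_insert:
  assumes "finite A" and "a \<notin> A"
  shows "bij_betw (\<lambda>(s, e). e(a := s))
    (SIGMA s:{0..t}. exponent_vectors A (t - s)) (exponent_vectors (insert a A) t)"
    (is "bij_betw ?extend ?split ?E")
proof (rule bij_betw_byWitness[where f' = "\<lambda>e. (e a, restrict e A)"])
  show "\<forall>p\<in>?split. (\<lambda>e. (e a, restrict e A)) (?extend p) = p"
    using assms(2)
    by (auto simp: exponent_vectors_def restrict_def PiE_def extensional_def fun_eq_iff)
  show "\<forall>e\<in>?E. ?extend (e a, restrict e A) = e"
    using assms(2) by (auto simp: exponent_vectors_def PiE_def extensional_def fun_eq_iff)
  show "?extend ` ?split \<subseteq> ?E"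
  proof clarify
    fix s e assume "s \<in> {0..t}" "e \<in> exponent_vectors A (t - s)"
    moreover have "sum (e(a := s)) (insert a A) = s + sum e A"
      using assms by (simp add: sum.insert_if) (rule sum.cong, auto)
    ultimately show "e(a := s) \<in> exponent_vectors (insert a A) t"
      using assms(2) by (auto simp: exponent_vectors_def PiE_def extensional_def Pi_def)
  qed
  show "(\<lambda>e. (e a, restrict e A)) ` ?E \<subseteq> ?split"
  proof (rule image_subsetI)
    fix e assume e: "e \<in> ?E"
    then have sum_e: "e a + sum e A = t"
      using assms by (simp add: exponent_vectors_def)
    moreover have "e i \<le> t - e a" if "i \<in> A" for i
    proof -
      have "e i \<le> sum e A" using that assms(1) by (intro member_le_sum) auto
      then show ?thesis using sum_e by simp
    qed
    moreover have "sum (restrict e A) A = sum e A" by (rule sum.cong) auto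
    ultimately show "(e a, restrict e A) \<in> ?split"
      using e by (auto simp: exponent_vectors_def)
  qed
qed

lemma complete_hom_on_insert:
  assumes "finite A" and "a \<notin> A"
  shows "complete_hom_on (insert a A) t x = (\<Sum>s\<in>{0..t}. x a ^ s * complete_hom_on A (t - s) x)"
proof -
  have "(\<Sum>s\<in>{0..t}. x a ^ s * complete_hom_on A (t - s) x)
      = (\<Sum>(s, e)\<in>(SIGMA s:{0..t}. exponent_vectors A (t - s)). x a ^ s * (\<Prod>i\<in>A. x i ^ e i))"
    unfolding complete_hom_on_def sum_distrib_left
    by (rule sum.Sigma) (auto simp: finite_exponent_vectors assms(1))
  also have "\<dots> = (\<Sum>(s, e)\<in>(SIGMA s:{0..t}. exponent_vectors A (t - s)).
                        \<Prod>i\<in>insert a A. x i ^ (e(a := s)) i)"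
  proof (intro sum.cong refl, clarify)
    fix s e
    have "(\<Prod>i\<in>A. x i ^ (e(a := s)) i) = (\<Prod>i\<in>A. x i ^ e i)"
      using assms(2) by (intro prod.cong) auto
    then show "x a ^ s * (\<Prod>i\<in>A. x i ^ e i) = (\<Prod>i\<in>insert a A. x i ^ (e(a := s)) i)"
      using assms by (simp add: prod.insert)
  qed
  also have "\<dots> = complete_hom_on (insert a A) t x"
    unfolding complete_hom_on_def
    using sum.reindex_bij_betw[OF bij_betw_exponent_vectors_insert[OF assms], unfolded case_prod_unfold]
    by (simp only: case_prod_unfold)
  finally show ?thesis ..
qed

lemma complete_hom_on_0 [simp]: "finite A \<Longrightarrow> complete_hom_on A 0 x = 1"
  by (induction A rule: finite_induct) (simp_all add: complete_hom_on_empty complete_hom_on_insert)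

lemma complete_hom_on_singleton: "complete_hom_on {a} t x = x a ^ t"
  using complete_hom_on_insert[of "{}" a t x]
  by (simp add: complete_hom_on_empty if_distrib[of "(*) _"] sum.delta' cong: if_cong)

lemma complete_hom_on_insert_Suc:
  assumes "finite A" and "a \<notin> A"
  shows "complete_hom_on (insert a A) (Suc t) x
       = complete_hom_on A (Suc t) x + x a * complete_hom_on (insert a A) t x"
proof -
  have "complete_hom_on (insert a A) (Suc t) x = complete_hom_on A (Suc t) x
      + (\<Sum>s\<in>{0..t}. x a ^ Suc s * complete_hom_on A (Suc t - Suc s) x)"
    unfolding complete_hom_on_insert[OF assms] by (subst sum.atLeast0_atMost_Suc_shift) simp
  then show ?thesis
    unfolding complete_hom_on_insert[OF assms, of t] by (simp add: sum_distrib_left mult.assoc)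
qed

definition lagrange_weight :: "'b set \<Rightarrow> ('b \<Rightarrow> 'a::field) \<Rightarrow> 'b \<Rightarrow> 'a" where
  "lagrange_weight A x i = (\<Prod>j\<in>A - {i}. inverse (x i - x j))"

(* The divided difference of t^m at the nodes x(A); for A = {1..n} this is the paper's
   sum_i u_i alpha_i^m. *)
definition power_divdiff :: "'b set \<Rightarrow> ('b \<Rightarrow> 'a::field) \<Rightarrow> nat \<Rightarrow> 'a" where
  "power_divdiff A x m = (\<Sum>i\<in>A. lagrange_weight A x i * x i ^ m)"

lemma power_divdiff_singleton: "power_divdiff {a} x m = x a ^ m"
  by (simp add: power_divdiff_def lagrange_weight_def)

lemma lagrange_weight_remove:
  assumes "finite A" and "i \<in> A - {c}" and "c \<in> A" and "x i \<noteq> x c"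
  shows "(x i - x c) * lagrange_weight A x i = lagrange_weight (A - {c}) x i"
proof -
  have "A - {i} = insert c (A - {c} - {i})" using assms(2,3) by auto
  then show ?thesis
    using assms by (simp add: lagrange_weight_def prod.insert)
qed

lemma power_divdiff_Suc:
  assumes "finite A" and "c \<in> A" and "inj_on x A"
  shows "power_divdiff A x (Suc m) = power_divdiff (A - {c}) x m + x c * power_divdiff A x m"
proof -
  have "power_divdiff A x (Suc m) - x c * power_divdiff A x m
      = (\<Sum>i\<in>A. (x i - x c) * lagrange_weight A x i * x i ^ m)"
    unfolding power_divdiff_def sum_distrib_left sum_subtractf[symmetric]
    by (rule sum.cong) (auto simp: algebra_simps)
  also have "\<dots> = (\<Sum>i\<in>A - {c}. (x i - x c) * lagrange_weight A x i * x i ^ m)"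
    using assms(1,2) by (simp add: sum.remove)
  also have "\<dots> = power_divdiff (A - {c}) x m"
    unfolding power_divdiff_def
  proof (rule sum.cong)
    fix i assume "i \<in> A - {c}"
    moreover from this have "x i \<noteq> x c" using assms(2) inj_onD[OF assms(3)] by blast
    ultimately have "(x i - x c) * lagrange_weight A x i = lagrange_weight (A - {c}) x i"
      using assms(1,2) by (intro lagrange_weight_remove)
    then show "(x i - x c) * lagrange_weight A x i * x i ^ m
             = lagrange_weight (A - {c}) x i * x i ^ m"
      by (simp only:)
  qed simp
  finally show ?thesis by (simp add: algebra_simps)
qed

lemma power_divdiff_0_eq_0:
  assumes "finite A" and "2 \<le> card A" and "inj_on x A"
  shows "power_divdiff A x 0 = 0"
  using assms
proof (induction "card A" arbitrary: A rule: less_induct)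
  case less
  have "\<not> card A \<le> Suc 0" using less.prems(2) by simp
  then obtain a b where "a \<in> A" and "b \<in> A" and "a \<noteq> b"
    using card_le_Suc0_iff_eq[OF less.prems(1)] by blast
  then have "x a \<noteq> x b" using inj_onD[OF less.prems(3)] by blast
  have removed: "power_divdiff (A - {c}) x 0 = (if card A = 2 then 1 else 0)" if "c \<in> A" for c
  proof (cases "card A = 2")
    case True
    then have "card (A - {c}) = 1" using that less.prems(1) by simp
    then obtain d where "A - {c} = {d}" by (rule card_1_singletonE)
    then show ?thesis using True by (simp add: power_divdiff_singleton)
  next
    case False
    then have "card (A - {c}) < card A" and "2 \<le> card (A - {c})"
      using that less.prems(1,2) by (simp_all add: card_Diff1_less)
    then show ?thesis
      using False less.hyps[of "A - {c}"] less.prems(1,3) by (simp add: inj_on_diff)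
  qed
  \<comment> \<open>Removing the node \<open>a\<close> or the node \<open>b\<close> gives two expressions for
    \<open>power_divdiff A x 1\<close> that differ by \<open>(x a - x b) * power_divdiff A x 0\<close>.\<close>
  have "power_divdiff A x 1 = power_divdiff (A - {c}) x 0 + x c * power_divdiff A x 0"
    if "c \<in> A" for c
    using power_divdiff_Suc[OF less.prems(1) that less.prems(3), of 0] by simp
  then have "x a * power_divdiff A x 0 = x b * power_divdiff A x 0"
    using removed \<open>a \<in> A\<close> \<open>b \<in> A\<close> by (metis add_left_cancel)
  then show ?case using \<open>x a \<noteq> x b\<close> by simp
qed

theorem power_divdiff_eq_complete_hom_on:
  assumes "finite A" and "card A = Suc N" and "inj_on x A"
  shows "power_divdiff A x m = (if m < N then 0 else complete_hom_on A (m - N) x)"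
  using assms
proof (induction N arbitrary: A m)
  case 0
  then obtain a where "A = {a}" by (auto simp: card_Suc_eq)
  then show ?case by (simp add: power_divdiff_singleton complete_hom_on_singleton)
next
  case (Suc N)
  note prems = Suc.prems
  then obtain a where "a \<in> A" by fastforce
  let ?B = "A - {a}"
  have "finite ?B" and "a \<notin> ?B" and "A = insert a ?B" using prems(1) \<open>a \<in> A\<close> by auto
  have IH: "power_divdiff ?B x m = (if m < N then 0 else complete_hom_on ?B (m - N) x)" for m
    using Suc.IH[of ?B] prems \<open>a \<in> A\<close> by (simp add: inj_on_diff)
  note rec = power_divdiff_Suc[OF prems(1) \<open>a \<in> A\<close> prems(3)]
  show ?case
  proof (induction m)
    case 0
    then show ?case using power_divdiff_0_eq_0[OF prems(1) _ prems(3)] prems(2) by simp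
  next
    case (Suc m)
    consider "m < N" | "m = N" | "N < m" by linarith
    then show ?case
    proof cases
      case 1
      then show ?thesis using Suc.IH rec[of m] IH[of m] by simp
    next
      case 2
      then show ?thesis using Suc.IH rec[of m] IH[of m] \<open>finite ?B\<close> prems(1) by simp
    next
      case 3
      then have "m - N = Suc (m - Suc N)" by simp
      with complete_hom_on_insert_Suc[OF \<open>finite ?B\<close> \<open>a \<notin> ?B\<close>, of "m - Suc N" x]
      show ?thesis
        using 3 Suc.IH rec[of m] IH[of m] \<open>A = insert a ?B\<close> by simp
    qed
  qed
qed

lemma sum_lagrange_weight_poly_power:
  assumes "finite A" and "degree f < N"
  shows "(\<Sum>i\<in>A. lagrange_weight A x i * poly f (x i) * x i ^ m)
       = (\<Sum>j<N. coeff f j * power_divdiff A x (m + j))"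
proof -
  have poly_f: "poly f y = (\<Sum>j<N. coeff f j * y ^ j)" for y
    unfolding poly_altdef using assms(2)
    by (intro sum.mono_neutral_left) (auto simp: coeff_eq_0)
  have "(\<Sum>i\<in>A. lagrange_weight A x i * poly f (x i) * x i ^ m)
      = (\<Sum>i\<in>A. \<Sum>j<N. coeff f j * (lagrange_weight A x i * x i ^ (m + j)))"
    unfolding poly_f sum_distrib_left sum_distrib_right
    by (intro sum.cong refl) (simp add: power_add mult_ac)
  also have "\<dots> = (\<Sum>j<N. coeff f j * power_divdiff A x (m + j))"
    unfolding power_divdiff_def sum_distrib_left by (rule sum.swap)
  finally show ?thesis .
qed

lemma lagrange_interpolation:
  fixes x w :: "'b \<Rightarrow> 'a::field"
  assumes "finite A" and "A \<noteq> {}" and "inj_on x A"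
  shows "\<exists>g. degree g < card A \<and> (\<forall>i\<in>A. w i = lagrange_weight A x i * poly g (x i))"
proof -
  define g where "g = (\<Sum>l\<in>A. smult (w l) (\<Prod>j\<in>A - {l}. [:- x j, 1:]))"
  have "0 < card A" using assms(1,2) by (simp add: card_gt_0_iff)
  moreover have "degree (smult (w l) (\<Prod>j\<in>A - {l}. [:- x j, 1:])) < card A" if "l \<in> A" for l
    using assms(1) that card_Diff1_less[OF assms(1) that]
    by (auto simp: degree_prod_eq_sum_degree card_gt_0_iff)
  ultimately have "degree g < card A"
    unfolding g_def by (intro degree_sum_less)
  moreover have "w i = lagrange_weight A x i * poly g (x i)" if "i \<in> A" for i
  proof -
    have "poly g (x i) = (\<Sum>l\<in>A. if l = i then w i * (\<Prod>j\<in>A - {i}. x i - x j) else 0)"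
      unfolding g_def poly_sum poly_smult poly_prod
      using that assms(1) by (intro sum.cong refl) (auto intro: prod_zero)
    also have "\<dots> = w i * (\<Prod>j\<in>A - {i}. x i - x j)"
      using that assms(1) by simp
    finally have "lagrange_weight A x i * poly g (x i)
        = w i * (\<Prod>j\<in>A - {i}. inverse (x i - x j) * (x i - x j))"
      by (simp add: lagrange_weight_def prod.distrib)
    also have "\<dots> = w i"
    proof -
      have "x i \<noteq> x j" if "j \<in> A - {i}" for j
        using \<open>i \<in> A\<close> that assms(3) unfolding inj_on_def by blast
      then show ?thesis by simp
    qed
    finally show ?thesis ..
  qed
  ultimately show ?thesis by blast
qed

lemma sum_lagrange_weight_poly_power_eq_complete_hom:
  assumes "inj_on x {1..n}" and "0 < n" and "degree f < n"
  shows "(\<Sum>i\<in>{1..n}. lagrange_weight {1..n} x i * poly f (x i) * x i ^ m)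
       = (\<Sum>j<n. coeff f j * (if m + j < n - 1 then 0 else complete_hom n (m + j - (n - 1)) x))"
proof -
  have "card {1..n} = Suc (n - 1)" using assms(2) by simp
  note power_divdiff = power_divdiff_eq_complete_hom_on[OF finite_atLeastAtMost this assms(1)]
  have "(\<Sum>i\<in>{1..n}. lagrange_weight {1..n} x i * poly f (x i) * x i ^ m)
      = (\<Sum>j<n. coeff f j * power_divdiff {1..n} x (m + j))"
    using assms(3) by (intro sum_lagrange_weight_poly_power) simp_all
  then show ?thesis
    unfolding power_divdiff complete_hom_eq_complete_hom_on by simp
qed

lemma coeff_vanish_of_shifted_sums:
  fixes c S :: "nat \<Rightarrow> 'a::comm_ring_1"
  assumes "S 0 = 1"
    and sums: "\<And>m. m < L \<Longrightarrow> (\<Sum>j<n. c j * (if m + j < n - 1 then 0 else S (m + j - (n - 1)))) = 0"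
    and "n \<le> j + L" and "j < n"
  shows "c j = 0"
  using assms(3,4)
proof (induction "n - 1 - j" arbitrary: j rule: less_induct)
  case less
  \<comment> \<open>As \<open>S 0 = 1\<close>, the \<open>m\<close>-th sum is \<open>c j\<close> plus coefficients of higher index.\<close>
  define m where "m = n - 1 - j"
  have "(\<Sum>j'<n. c j' * (if m + j' < n - 1 then 0 else S (m + j' - (n - 1))))
      = (\<Sum>j'<n. if j' = j then c j else 0)"
  proof (intro sum.cong refl)
    fix j' assume "j' \<in> {..<n}"
    consider "j' < j" | "j' = j" | "j < j'" by linarith
    then show "c j' * (if m + j' < n - 1 then 0 else S (m + j' - (n - 1)))
             = (if j' = j then c j else 0)"
    proof cases
      case 3
      then have "c j' = 0" using less \<open>j' \<in> {..<n}\<close> by auto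
      then show ?thesis using 3 by simp
    qed (use less.prems assms(1) in \<open>auto simp: m_def\<close>)
  qed
  moreover have "m < L" using less.prems by (simp add: m_def)
  ultimately show "c j = 0" using sums less.prems(2) by simp
qed

(* sum_{j=s}^t f_j S_{j-s}, with f_j = 0 for j < 0: the shape of conditions (2) and (3). *)
definition coeff_conv :: "'a::comm_ring_1 poly \<Rightarrow> (nat \<Rightarrow> 'a) \<Rightarrow> int \<Rightarrow> int \<Rightarrow> 'a" where
  "coeff_conv f S s t = (\<Sum>j\<in>{s..t}. icoeff f j * S (nat (j - s)))"

lemma coeff_conv_eq_shifted_sum:
  fixes f :: "'a::comm_ring_1 poly"
  assumes f: "\<forall>j. int j > T \<longrightarrow> coeff f j = 0" and "T < int n" and "0 < n"
  shows "coeff_conv f S (int n - int m - 1) T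
       = (\<Sum>j<n. coeff f j * (if m + j < n - 1 then 0 else S (m + j - (n - 1))))"
proof -
  define s where "s = int n - int m - 1"
  define G where "G j = (if s \<le> j then icoeff f j * S (nat (j - s)) else 0)" for j
  have G0: "G j = 0" if "j < s \<or> j < 0 \<or> T < j" for j
    using that f by (auto simp: G_def icoeff_def)
  have "coeff_conv f S s T = sum G {s..T}"
    unfolding coeff_conv_def G_def by (intro sum.cong) auto
  also have "\<dots> = sum G ({s..T} \<union> int ` {..<n})"
    by (intro sum.mono_neutral_left) (auto simp: G0)
  also have "\<dots> = sum G (int ` {..<n})"
  proof (intro sum.mono_neutral_right ballI)
    fix i assume i: "i \<in> {s..T} \<union> int ` {..<n} - int ` {..<n}"
    have "i < 0"
    proof (rule ccontr)
      assume "\<not> i < 0"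
      then have "nat i < n" and "i = int (nat i)" using i \<open>T < int n\<close> by auto
      then show False using i by blast
    qed
    then show "G i = 0" by (simp add: G0)
  qed auto
  also have "\<dots> = (\<Sum>j<n. G (int j))"
    by (simp add: sum.reindex)
  also have "\<dots> = (\<Sum>j<n. coeff f j * (if m + j < n - 1 then 0 else S (m + j - (n - 1))))"
  proof (intro sum.cong refl)
    fix j
    have "s \<le> int j \<longleftrightarrow> \<not> m + j < n - 1" and "nat (int j - s) = m + j - (n - 1)"
      using \<open>0 < n\<close> by (auto simp: s_def)
    then show "G (int j) = coeff f j * (if m + j < n - 1 then 0 else S (m + j - (n - 1)))"
      by (simp add: G_def icoeff_def)
  qed
  finally show ?thesis by (simp add: s_def)
qed

lemma sum_lagrange_weight_poly_power_eq_coeff_conv: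
  assumes "inj_on x {1..n}" and "0 < n" and "T < int n" and f: "\<forall>j. int j > T \<longrightarrow> coeff f j = 0"
  shows "(\<Sum>i\<in>{1..n}. lagrange_weight {1..n} x i * poly f (x i) * x i ^ m)
       = coeff_conv f (\<lambda>t. complete_hom n t x) (int n - int m - 1) T"
proof -
  have "degree f \<le> n - 1"
    using f \<open>T < int n\<close> by (intro degree_le) auto
  then have "degree f < n" using \<open>0 < n\<close> by linarith
  then show ?thesis
    unfolding coeff_conv_eq_shifted_sum[OF assms(4,3,2)]
    by (rule sum_lagrange_weight_poly_power_eq_complete_hom[OF assms(1,2)])
qed

theorem moments_vanish_iff_lagrange_poly:
  fixes x w :: "nat \<Rightarrow> 'a::field" and L :: nat and X :: "nat set"
  assumes inj: "inj_on x {1..n}" and "0 < n"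
  defines "T \<equiv> int n - 1 - int L"
  shows "(\<forall>m. m < L \<or> m \<in> X \<longrightarrow> (\<Sum>i\<in>{1..n}. w i * x i ^ m) = 0) \<longleftrightarrow>
    (\<exists>f. (\<forall>j. int j > T \<longrightarrow> coeff f j = 0) \<and>
         (\<forall>i\<in>{1..n}. w i = lagrange_weight {1..n} x i * poly f (x i)) \<and>
         (\<forall>m\<in>X. coeff_conv f (\<lambda>t. complete_hom n t x) (int n - int m - 1) T = 0))"
    (is "?moments \<longleftrightarrow> (\<exists>f. ?poly f)")
proof -
  let ?S = "\<lambda>t. complete_hom n t x"
  have T: "T < int n" by (simp add: T_def)
  have moment: "(\<Sum>i\<in>{1..n}. w i * x i ^ m)
      = (\<Sum>i\<in>{1..n}. lagrange_weight {1..n} x i * poly f (x i) * x i ^ m)"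
    if "\<forall>i\<in>{1..n}. w i = lagrange_weight {1..n} x i * poly f (x i)" for f m
    using that by simp
  show ?thesis
  proof
    assume vanish: ?moments
    obtain g where "degree g < n"
      and wg: "\<forall>i\<in>{1..n}. w i = lagrange_weight {1..n} x i * poly g (x i)"
      using lagrange_interpolation[OF _ _ inj, of w] \<open>0 < n\<close> by auto
    have shifted_sums: "(\<Sum>j<n. coeff g j * (if m + j < n - 1 then 0 else ?S (m + j - (n - 1)))) = 0"
      if "m < L" for m
      using vanish that moment[OF wg, of m]
        sum_lagrange_weight_poly_power_eq_complete_hom[OF inj \<open>0 < n\<close> \<open>degree g < n\<close>] by simp
    have "coeff g j = 0" if "int j > T" for j
    proof (cases "j < n")
      case True
      show ?thesis
        by (rule coeff_vanish_of_shifted_sums[of ?S, OF _ shifted_sums])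
          (use that True in \<open>auto simp: T_def complete_hom_eq_complete_hom_on\<close>)
    next
      case False
      then show ?thesis using \<open>degree g < n\<close> by (simp add: coeff_eq_0)
    qed
    then have "?poly g"
      using wg vanish moment[OF wg] sum_lagrange_weight_poly_power_eq_coeff_conv[OF inj \<open>0 < n\<close> T]
      by auto
    then show "\<exists>f. ?poly f" ..
  next
    assume "\<exists>f. ?poly f"
    then obtain f where f: "?poly f" ..
    have "(\<Sum>i\<in>{1..n}. w i * x i ^ m) = coeff_conv f ?S (int n - int m - 1) T" for m
      using f moment sum_lagrange_weight_poly_power_eq_coeff_conv[OF inj \<open>0 < n\<close> T] by auto
    moreover have "coeff_conv f ?S (int n - int m - 1) T = 0" if "m < L" for m
      using that by (simp add: coeff_conv_def T_def)
    ultimately show ?moments using f by auto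
  qed
qed

lemma row_mem_row_span:
  assumes "finite R" and "e \<in> R"
  shows "(\<lambda>i. if i \<in> {1..n} then g e i else 0) \<in> row_span n R g"
proof -
  have "(\<Sum>e'\<in>R. of_bool (e' = e) * g e' i) = (\<Sum>e'\<in>R. if e' = e then g e i else 0)" for i
    by (rule sum.cong) auto
  also have "\<dots> i = g e i" for i using assms by simp
  finally show ?thesis
    unfolding row_span_def by (intro CollectI exI[of _ "\<lambda>e'. of_bool (e' = e)"]) (simp only:)
qed

lemma euclid_inner_row_span:
  assumes "finite R"
  shows "euclid_inner n (\<lambda>i. if i \<in> {1..n} then \<Sum>e\<in>R. c e * g e i else 0)
                        (\<lambda>i. if i \<in> {1..n} then \<Sum>e\<in>R. d e * g e i else 0)
       = (\<Sum>e\<in>R. \<Sum>e'\<in>R. c e * d e' * (\<Sum>i\<in>{1..n}. g e i * g e' i))"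
proof -
  have "euclid_inner n (\<lambda>i. if i \<in> {1..n} then \<Sum>e\<in>R. c e * g e i else 0)
                        (\<lambda>i. if i \<in> {1..n} then \<Sum>e\<in>R. d e * g e i else 0)
      = (\<Sum>i\<in>{1..n}. \<Sum>e\<in>R. \<Sum>e'\<in>R. c e * d e' * (g e i * g e' i))"
    unfolding euclid_inner_def by (intro sum.cong refl) (simp add: sum_product mult_ac)
  also have "\<dots> = (\<Sum>e\<in>R. \<Sum>i\<in>{1..n}. \<Sum>e'\<in>R. c e * d e' * (g e i * g e' i))"
    by (rule sum.swap)
  also have "\<dots> = (\<Sum>e\<in>R. \<Sum>e'\<in>R. \<Sum>i\<in>{1..n}. c e * d e' * (g e i * g e' i))"
    by (intro sum.cong refl sum.swap)
  finally show ?thesis by (simp add: sum_distrib_left)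
qed

lemma self_orthogonal_row_span_iff:
  assumes "finite R"
  shows "self_orthogonal n (row_span n R g) \<longleftrightarrow> (\<forall>e\<in>R. \<forall>e'\<in>R. (\<Sum>i\<in>{1..n}. g e i * g e' i) = 0)"
proof
  assume "self_orthogonal n (row_span n R g)"
  then have "euclid_inner n (\<lambda>i. if i \<in> {1..n} then g e i else 0)
                            (\<lambda>i. if i \<in> {1..n} then g e' i else 0) = 0"
    if "e \<in> R" and "e' \<in> R" for e e'
    using row_mem_row_span[OF assms] that unfolding self_orthogonal_def dual_code_def by blast
  then show "\<forall>e\<in>R. \<forall>e'\<in>R. (\<Sum>i\<in>{1..n}. g e i * g e' i) = 0"
    by (simp add: euclid_inner_def)
next
  assume rows: "\<forall>e\<in>R. \<forall>e'\<in>R. (\<Sum>i\<in>{1..n}. g e i * g e' i) = 0"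
  show "self_orthogonal n (row_span n R g)"
    unfolding self_orthogonal_def dual_code_def
  proof (intro subsetI CollectI conjI allI impI ballI)
    fix y i assume "y \<in> row_span n R g" and "i \<notin> {1..n}"
    then show "y i = 0" unfolding row_span_def by auto
  next
    fix y z assume "y \<in> row_span n R g" and "z \<in> row_span n R g"
    then obtain c d where z: "z = (\<lambda>i. if i \<in> {1..n} then \<Sum>e\<in>R. c e * g e i else 0)"
      and y: "y = (\<lambda>i. if i \<in> {1..n} then \<Sum>e\<in>R. d e * g e i else 0)"
      unfolding row_span_def by blast
    have "euclid_inner n z y = (\<Sum>e\<in>R. \<Sum>e'\<in>R. c e * d e' * (\<Sum>i\<in>{1..n}. g e i * g e' i))"
      unfolding z y by (rule euclid_inner_row_span[OF assms])
    also have "\<dots> = 0" using rows by simp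
    finally show "euclid_inner n z y = 0" .
  qed
qed

lemma self_orthogonal_GRS_code_iff:
  fixes \<alpha> v :: "nat \<Rightarrow> 'a::field"
  assumes "2 \<le> k"
  shows "self_orthogonal n (GRS_code n k h \<alpha> v) \<longleftrightarrow>
    (\<forall>m. m < 2 * k - 3 \<or> m \<in> {h..h + k - 2} \<union> {2 * h} \<longrightarrow> (\<Sum>i\<in>{1..n}. v i ^ 2 * \<alpha> i ^ m) = 0)"
proof -
  define P where "P m \<longleftrightarrow> (\<Sum>i\<in>{1..n}. v i ^ 2 * \<alpha> i ^ m) = 0" for m
  have "finite ({0..k-2} \<union> {h})" by simp
  then have "self_orthogonal n (GRS_code n k h \<alpha> v)
      \<longleftrightarrow> (\<forall>e\<in>{0..k-2} \<union> {h}. \<forall>e'\<in>{0..k-2} \<union> {h}. P (e + e'))"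
    unfolding GRS_code_def P_def
    by (simp add: self_orthogonal_row_span_iff power_add power2_eq_square mult_ac)
  also have "\<dots> \<longleftrightarrow> (\<forall>m. m < 2 * k - 3 \<or> m \<in> {h..h + k - 2} \<union> {2 * h} \<longrightarrow> P m)"
  proof (intro iffI allI impI ballI)
    fix m assume sums: "\<forall>e\<in>{0..k-2} \<union> {h}. \<forall>e'\<in>{0..k-2} \<union> {h}. P (e + e')"
      and "m < 2 * k - 3 \<or> m \<in> {h..h + k - 2} \<union> {2 * h}"
    then consider "m < 2 * k - 3" | "m \<in> {h..h + k - 2}" | "m = 2 * h" by auto
    then show "P m"
    proof cases
      case 1
      then have "min m (k - 2) \<in> {0..k-2}" and "m - min m (k - 2) \<in> {0..k-2}"
        by (auto simp: min_def)
      then have "P (min m (k - 2) + (m - min m (k - 2)))" using sums by blast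
      then show ?thesis by simp
    next
      case 2
      then have "m - h \<in> {0..k-2}" by auto
      then have "P (m - h + h)" using sums by blast
      then show ?thesis using 2 by simp
    next
      case 3
      then show ?thesis using sums by (simp add: mult_2)
    qed
  next
    fix e e' assume "\<forall>m. m < 2 * k - 3 \<or> m \<in> {h..h + k - 2} \<union> {2 * h} \<longrightarrow> P m"
      and "e \<in> {0..k-2} \<union> {h}" and "e' \<in> {0..k-2} \<union> {h}"
    then show "P (e + e')"
      using \<open>2 \<le> k\<close> by (auto simp: mult_2 add.commute)
  qed
  finally show ?thesis unfolding P_def .
qed

lemma all_int_interval_iff_all_nat:
  "(\<forall>l::int. int a \<le> l \<and> l \<le> int b \<longrightarrow> Q l) \<longleftrightarrow> (\<forall>m\<in>{a..b}. Q (int m))"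
proof safe
  fix l :: int assume "\<forall>m\<in>{a..b}. Q (int m)" and "int a \<le> l" and "l \<le> int b"
  moreover from \<open>int a \<le> l\<close> have "l = int (nat l)" by simp
  ultimately show "Q l" by (metis atLeastAtMost_iff nat_le_iff nat_int)
qed auto

theorem theorem4p12:
  fixes \<alpha> v :: "nat \<Rightarrow> 'a::{field,finite}"
    and n k r h :: nat
  assumes "3 \<le> k" and "k \<le> n - 2" and "int n - 2 \<le> int (CARD('a)) - 2"
    and "k - 1 \<le> r" and "int r \<le> int (CARD('a)) - int k - 1"
    and "h = (k - 1) + r"
    and "inj_on \<alpha> {1..n}"
    and "\<forall>i\<in>{1..n}. v i \<noteq> 0"
  shows "self_orthogonal n (GRS_code n k h \<alpha> v) \<longleftrightarrow>
    (\<exists>f :: 'a poly.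
       (\<forall>j. int j > int n - 2 * int k + 2 \<longrightarrow> coeff f j = 0) \<and>
       (\<forall>i\<in>{1..n}. (v i)^2 = (\<Prod>j\<in>{1..n}-{i}. inverse (\<alpha> i - \<alpha> j)) * poly f (\<alpha> i)) \<and>
       (let b = int n - 2 * int k - 2 * int r + 1 in
          (\<Sum>j\<in>{b..b + 2 * int r + 1}. icoeff f j * complete_hom n (nat (j - b)) \<alpha>) = 0) \<and>
       (\<forall>l::int. (int k - 1) + int r \<le> l \<and> l \<le> (2 * int k - 3) + int r \<longrightarrow>
          (let s = int n - l - 1 in
             (\<Sum>j\<in>{s..s + l - 2 * int k + 3}. icoeff f j * complete_hom n (nat (j - s)) \<alpha>) = 0)))"
proof -
  have "2 \<le> k" and "0 < n" using assms(1,2) by simp_all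
  let ?S = "\<lambda>t. complete_hom n t \<alpha>" and ?T = "int n - 2 * int k + 2"
  have T: "int n - 1 - int (2 * k - 3) = ?T" using assms(1) by simp
  have cond2: "(let b = int n - 2 * int k - 2 * int r + 1 in
        (\<Sum>j\<in>{b..b + 2 * int r + 1}. icoeff f j * complete_hom n (nat (j - b)) \<alpha>) = 0)
      \<longleftrightarrow> coeff_conv f ?S (int n - int (2 * h) - 1) ?T = 0" for f
    using assms(1,6) by (simp add: coeff_conv_def Let_def algebra_simps)
  have cond3: "(\<forall>l::int. (int k - 1) + int r \<le> l \<and> l \<le> (2 * int k - 3) + int r \<longrightarrow>
        (let s = int n - l - 1 in
           (\<Sum>j\<in>{s..s + l - 2 * int k + 3}. icoeff f j * complete_hom n (nat (j - s)) \<alpha>) = 0))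
      \<longleftrightarrow> (\<forall>m\<in>{h..h + k - 2}. coeff_conv f ?S (int n - int m - 1) ?T = 0)" for f
  proof -
    have "(let s = int n - l - 1 in
        (\<Sum>j\<in>{s..s + l - 2 * int k + 3}. icoeff f j * complete_hom n (nat (j - s)) \<alpha>) = 0)
      \<longleftrightarrow> coeff_conv f ?S (int n - l - 1) ?T = 0" for l
      by (simp add: coeff_conv_def Let_def algebra_simps)
    moreover have "int k - 1 + int r = int h" and "2 * int k - 3 + int r = int (h + k - 2)"
      using assms(1,6) by simp_all
    ultimately show ?thesis
      by (simp only: all_int_interval_iff_all_nat)
  qed
  show ?thesis
    unfolding self_orthogonal_GRS_code_iff[OF \<open>2 \<le> k\<close>]
      moments_vanish_iff_lagrange_poly[OF assms(7) \<open>0 < n\<close>] T cond2 cond3 lagrange_weight_def ball_Un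
    by auto
qed

end
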